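(* Let $\sigma$ be a regular $k$-gon in $\mathbb{R}^2$, $k\ge 4$, with diameter $w$ satisfying $2^j\le w<2^{j+1}$ for some integer $j\ge 0$, and let $\mathcal{K}_\sigma$ be its shrunk set. Then $\sigma=\bigcup_{\sigma'\in\mathcal{K}_\sigma}\sigma'$.
   Context: The diameter of a regular $k$-gon is the diameter of its smallest enclosing disk. Shrunk set: if $w=2^j$, then $\mathcal{K}_\sigma=\{\sigma\}$. Otherwise, let $\sigma'_0$ be the concentric scaled copy of $\sigma$ of diameter $2^j$, let $c_1,\dots,c_k$ be the corners of $\sigma$, and for each $i\in[k]$ let $\sigma'_i$ be the image of $\sigma$ under the homothety with center $c_i$ and ratio $2^j/w$ (so $\sigma'_i$ is a translate of $\sigma'_0$ contained in $\sigma$ having $c_i$ as a corner); then $\mathcal{K}_\sigma=\{\sigma'_0,\sigma'_1,\dots,\sigma'_k\}$. *)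

theory Defs
  imports "HOL-Analysis.Analysis"
begin

text \<open>The plane R^2 is modelled by the type complex (a 2-dimensional euclidean space).\<close>

definition reg_vertex :: "nat \<Rightarrow> complex \<Rightarrow> real \<Rightarrow> real \<Rightarrow> nat \<Rightarrow> complex" where
  "reg_vertex k c r theta i = c + complex_of_real r * cis (theta + 2 * pi * real i / real k)"

definition regular_polygon :: "nat \<Rightarrow> complex \<Rightarrow> real \<Rightarrow> real \<Rightarrow> complex set" where
  "regular_polygon k c r theta = convex hull (reg_vertex k c r theta ` {..<k})"

definition enclosing_diameter :: "complex set \<Rightarrow> real" where
  "enclosing_diameter S = Inf {2 * e | x e. S \<subseteq> cball x e}"

definition homothety :: "complex \<Rightarrow> real \<Rightarrow> complex \<Rightarrow> complex" where
  "homothety p lam x = p + complex_of_real lam * (x - p)"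

definition shrunk_set :: "nat \<Rightarrow> complex \<Rightarrow> real \<Rightarrow> real \<Rightarrow> nat \<Rightarrow> complex set set" where
  "shrunk_set k c r theta j =
     (let \<sigma> = regular_polygon k c r theta;
          w = enclosing_diameter \<sigma>;
          lam = (2::real) ^ j / w
      in if w = 2 ^ j then {\<sigma>}
         else insert (homothety c lam ` \<sigma>)
                ((\<lambda>i. homothety (reg_vertex k c r theta i) lam ` \<sigma>) ` {..<k}))"

end

theory Submission
  imports Defs
begin

text \<open>A point \<open>x\<close> of the polygon \<open>\<sigma>\<close> lies in a triangle spanned by the centre \<open>c\<close> and an edge
  \<open>v w\<close>: \<open>x = c + a (v - c) + b (w - c)\<close> with \<open>a, b \<ge> 0\<close>, \<open>a + b \<le> 1\<close>, say \<open>b \<le> a\<close>.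
  If \<open>a + b \<le> \<lambda>\<close>, then \<open>x\<close> lies in the copy of \<open>\<sigma>\<close> shrunk by \<open>\<lambda>\<close> towards \<open>c\<close>. Otherwise it lies in
  the copy shrunk towards the corner \<open>v\<close>: its preimage lies in the triangle \<open>c v w\<close> or in the
  triangle \<open>c, c + (w - v)/2, w\<close>, and \<open>c + (w - v)/2 \<in> \<sigma>\<close> because half an edge, \<open>r sin(\<pi>/k)\<close>,
  is at most the inradius \<open>r cos(\<pi>/k)\<close> when \<open>k \<ge> 4\<close>.\<close>

lemma convex_triangle_mem:
  fixes S :: "'a::real_vector set"
  assumes "convex S" "a \<in> S" "b \<in> S" "d \<in> S" "0 \<le> p" "0 \<le> q" "p + q \<le> 1"
  shows "a + p *\<^sub>R (b - a) + q *\<^sub>R (d - a) \<in> S"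
proof -
  have "a + p *\<^sub>R (b - a) + q *\<^sub>R (d - a) = (1 - p - q) *\<^sub>R a + p *\<^sub>R b + q *\<^sub>R d"
    by (simp add: algebra_simps)
  also have "\<dots> \<in> convex hull {a, b, d}"
    unfolding convex_hull_3 using assms by force
  also have "convex hull {a, b, d} \<subseteq> S"
    using assms by (simp add: hull_minimal)
  finally show ?thesis .
qed

lemma convex_homothety_image_subset:
  fixes S :: "'a::real_vector set"
  assumes "convex S" "p \<in> S" "0 \<le> lam" "lam \<le> 1"
  shows "(\<lambda>x. p + lam *\<^sub>R (x - p)) ` S \<subseteq> S"
proof clarify
  fix x assume "x \<in> S"
  have "p + lam *\<^sub>R (x - p) = (1 - lam) *\<^sub>R p + lam *\<^sub>R x"
    by (simp add: algebra_simps)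
  also have "\<dots> \<in> S"
    using assms \<open>x \<in> S\<close> by (intro convexD) auto
  finally show "p + lam *\<^sub>R (x - p) \<in> S" .
qed

lemma triangle_point_in_homothetic_copy:
  fixes S :: "'a::real_vector set"
  assumes mem: "convex S" "c \<in> S" "v \<in> S" "w \<in> S" "c + (1/2) *\<^sub>R (w - v) \<in> S"
    and coords: "0 \<le> b" "b \<le> a" "a + b \<le> 1"
    and lam_range: "1/2 < lam" "lam \<le> 1"
  shows "c + a *\<^sub>R (v - c) + b *\<^sub>R (w - c)
           \<in> (\<lambda>y. c + lam *\<^sub>R (y - c)) ` S \<union> (\<lambda>y. v + lam *\<^sub>R (y - v)) ` S"
    (is "?x \<in> _")
proof (cases "a + b \<le> lam")
  case True
  define y where "y = c + (a / lam) *\<^sub>R (v - c) + (b / lam) *\<^sub>R (w - c)"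
  have "y \<in> S"
    unfolding y_def using mem coords lam_range True
    by (intro convex_triangle_mem) (auto simp: field_simps)
  moreover have "c + lam *\<^sub>R (y - c) = ?x"
    unfolding y_def using lam_range by (simp add: algebra_simps)
  ultimately show ?thesis by (metis UnI1 rev_image_eqI)
next
  case False
  define y where "y = c + ((lam + a - 1) / lam) *\<^sub>R (v - c) + (b / lam) *\<^sub>R (w - c)"
  have "v + lam *\<^sub>R (y - v)
      = v + lam *\<^sub>R (c - v) + (lam * ((lam + a - 1) / lam)) *\<^sub>R (v - c) + (lam * (b / lam)) *\<^sub>R (w - c)"
    unfolding y_def by (simp add: algebra_simps)
  also have "\<dots> = ?x"
  proof -
    have coeffs: "lam * ((lam + a - 1) / lam) = lam + a - 1" "lam * (b / lam) = b"
      using lam_range by simp_all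
    show ?thesis
      unfolding coeffs by (simp add: algebra_simps)
  qed
  finally have "v + lam *\<^sub>R (y - v) = ?x" .
  moreover have "y \<in> S"
  proof (cases "1 - lam \<le> a")
    case True
    then show ?thesis
      unfolding y_def using mem coords lam_range
      by (intro convex_triangle_mem) (auto simp: field_simps)
  next
    case False
    \<comment> \<open>The coordinate along \<open>v - c\<close> is negative: use the triangle \<open>c, c + (w - v)/2, w\<close> instead.\<close>
    define s where "s = 2 * (1 - lam - a) / lam"
    define t where "t = (lam + a + b - 1) / lam"
    have coeffs: "- s / 2 = (lam + a - 1) / lam" "s / 2 + t = b / lam"
      unfolding s_def t_def using lam_range by (simp_all add: field_simps)
    have "y = c + (- s / 2) *\<^sub>R (v - c) + (s / 2 + t) *\<^sub>R (w - c)"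
      unfolding y_def coeffs ..
    also have "\<dots> = c + s *\<^sub>R ((c + (1/2) *\<^sub>R (w - v)) - c) + t *\<^sub>R (w - c)"
      by (simp add: algebra_simps)
    also have "\<dots> \<in> S"
    proof (rule convex_triangle_mem)
      have "s + t = (1 - lam - a + b) / lam"
        unfolding s_def t_def using lam_range by (simp add: field_simps)
      also have "\<dots> \<le> 1"
        using lam_range coords by simp
      finally show "s + t \<le> 1" .
    qed (use mem coords lam_range False \<open>\<not> a + b \<le> lam\<close> in \<open>auto simp: s_def t_def\<close>)
    finally show ?thesis .
  qed
  ultimately show ?thesis by (metis UnI2 rev_image_eqI)
qed

lemma cis_add_multiple_2pi: "n \<in> \<int> \<Longrightarrow> cis (a + 2 * pi * n) = cis a"
  by (metis cis_mult cis_multiple_2pi mult.right_neutral)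

lemma cos_le_cos_between:
  assumes "0 \<le> a" "a \<le> pi" "a \<le> y" "y \<le> 2 * pi - a"
  shows "cos y \<le> cos a"
proof (cases "y \<le> pi")
  case True
  then show ?thesis using assms by (intro cos_monotone_0_pi_le) auto
next
  case False
  have "cos y = cos (2 * pi - y)" by (simp add: cos_diff)
  also have "\<dots> \<le> cos a" using assms False by (intro cos_monotone_0_pi_le) auto
  finally show ?thesis .
qed

lemma sin_le_cos: "0 \<le> x \<Longrightarrow> x \<le> pi / 4 \<Longrightarrow> sin x \<le> cos x"
  unfolding sin_cos_eq by (intro cos_monotone_0_pi_le) auto

lemma cos_pi_div_pos: "3 \<le> k \<Longrightarrow> 0 < cos (pi / real k)"
proof (rule cos_gt_zero_pi)
  assume "3 \<le> k"
  then have "0 < pi / real k" by simp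
  then show "- (pi / 2) < pi / real k" using pi_gt_zero by linarith
  have "pi / real k \<le> pi / 3" using \<open>3 \<le> k\<close> by (intro divide_left_mono) auto
  then show "pi / real k < pi / 2" using pi_gt_zero by linarith
qed

lemma sin_cis_interpolation:
  "complex_of_real (sin f) * cis (a + s * f)
     = complex_of_real (sin ((1 - s) * f)) * cis a + complex_of_real (sin (s * f)) * cis (a + f)"
proof -
  have "(1 - s) * f = f - s * f" by (simp add: algebra_simps)
  then show ?thesis
    by (simp add: complex_eq_iff sin_diff cos_add sin_add algebra_simps)
qed

lemma cis_mem_sector:
  assumes "0 < k"
  shows "\<exists>m<k. \<exists>s. 0 \<le> s \<and> s < 1 \<and> cis a = cis (theta + (real m + s) * (2 * pi / real k))"
proof -
  define f where "f = 2 * pi / real k"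
  define t where "t = (a - theta) / f"
  define n where "n = \<lfloor>t\<rfloor>"
  define m where "m = nat (n mod int k)"
  define s where "s = t - of_int n"
  have f0: "0 < f" unfolding f_def using assms by simp
  have "m < k" unfolding m_def using assms by (simp add: nat_less_iff)
  moreover have "0 \<le> s" "s < 1" unfolding s_def n_def by linarith+
  moreover have "cis a = cis (theta + (real m + s) * f)"
  proof -
    have "n = int m + int k * (n div int k)" unfolding m_def using assms by simp
    then have "real_of_int n = real m + real k * real_of_int (n div int k)"
      by (metis of_int_add of_int_mult of_int_of_nat_eq)
    then have "a = theta + (real m + s) * f + 2 * pi * real_of_int (n div int k)"
      using f0 assms unfolding s_def t_def f_def by (simp add: field_simps)
    then show ?thesis by (simp add: cis_add_multiple_2pi)
  qed
  ultimately show ?thesis unfolding f_def by blast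
qed

definition edge_normal :: "nat \<Rightarrow> real \<Rightarrow> nat \<Rightarrow> complex" where
  "edge_normal k theta m = cis (theta + (real m + 1/2) * (2 * pi / real k))"

lemma reg_vertex_cis:
  "reg_vertex k c r theta i = c + complex_of_real r * cis (theta + real i * (2 * pi / real k))"
  unfolding reg_vertex_def by (simp add: field_simps)

lemma reg_vertex_mod:
  assumes "0 < k"
  shows "reg_vertex k c r theta (m mod k) = reg_vertex k c r theta m"
proof -
  have "real m = real (m mod k) + real k * real (m div k)"
    by (metis of_nat_add of_nat_mult mod_mult_div_eq add.commute mult.commute)
  then have "theta + real m * (2 * pi / real k)
      = theta + real (m mod k) * (2 * pi / real k) + 2 * pi * real (m div k)"
    using assms by (simp add: field_simps)
  then show ?thesis
    unfolding reg_vertex_cis by (metis cis_add_multiple_2pi Ints_of_nat)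
qed

lemma convex_regular_polygon: "convex (regular_polygon k c r theta)"
  unfolding regular_polygon_def by simp

lemma reg_vertex_in_regular_polygon:
  assumes "0 < k"
  shows "reg_vertex k c r theta m \<in> regular_polygon k c r theta"
proof -
  have "reg_vertex k c r theta (m mod k) \<in> regular_polygon k c r theta"
    unfolding regular_polygon_def using assms by (intro hull_inc) auto
  then show ?thesis using reg_vertex_mod[OF assms] by simp
qed

lemma center_in_regular_polygon:
  assumes "2 \<le> k"
  shows "c \<in> regular_polygon k c r theta"
proof -
  define f where "f = 2 * pi / real k"
  have "0 < f" "f \<le> pi" unfolding f_def using assms by (auto simp: field_simps)
  then have "cos f < cos 0" by (intro cos_monotone_0_pi) auto
  then have "cis f \<noteq> 1" by (auto simp: complex_eq_iff)
  moreover have "cis f ^ k = 1"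
  proof -
    have "real k * f = 2 * pi" unfolding f_def using assms by simp
    then show ?thesis by (metis Complex.DeMoivre cis_2pi)
  qed
  ultimately have "(\<Sum>j<k. cis (theta + real j * f)) = 0"
    by (simp add: cis_mult [symmetric] Complex.DeMoivre [symmetric] sum_distrib_left [symmetric] sum_gp_strict)
  then have "(\<Sum>j<k. (1 / real k) *\<^sub>R reg_vertex k c r theta j) = c"
    using assms unfolding reg_vertex_cis f_def
    by (simp add: scaleR_conv_of_real sum.distrib algebra_simps flip: sum_distrib_left sum_divide_distrib)
  moreover have "(\<Sum>j<k. (1 / real k) *\<^sub>R reg_vertex k c r theta j) \<in> regular_polygon k c r theta"
    unfolding regular_polygon_def using assms by (intro convex_sum) (auto intro: hull_inc)
  ultimately show ?thesis by simp
qed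

lemma inner_of_real_mult_cis: "inner (complex_of_real r * cis a) (cis b) = r * cos (a - b)"
  by (simp add: inner_complex_def cos_diff algebra_simps)

lemma inner_reg_vertex_edge_normal:
  "inner (reg_vertex k c r theta j - c) (edge_normal k theta m)
     = r * cos ((real j - real m - 1/2) * (2 * pi / real k))"
  unfolding reg_vertex_cis edge_normal_def by (simp add: inner_of_real_mult_cis algebra_simps)

lemma inner_sector_point_edge_normal:
  "inner (p *\<^sub>R (reg_vertex k c r theta m - c) + q *\<^sub>R (reg_vertex k c r theta (Suc m) - c))
         (edge_normal k theta m)
     = (p + q) * (r * cos (pi / real k))"
proof -
  have "cos ((real m - real m - 1/2) * (2 * pi / real k)) = cos (pi / real k)"
    "cos ((real (Suc m) - real m - 1/2) * (2 * pi / real k)) = cos (pi / real k)"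
    by (simp_all add: field_simps)
  then show ?thesis
    unfolding inner_add_left inner_scaleR_left inner_reg_vertex_edge_normal
    by (simp add: algebra_simps)
qed

lemma regular_polygon_inner_edge_normal_le:
  assumes "0 \<le> r" "m < k" "z \<in> regular_polygon k c r theta"
  shows "inner (z - c) (edge_normal k theta m) \<le> r * cos (pi / real k)"
proof -
  define H where "H = {x. inner (x - c) (edge_normal k theta m) \<le> r * cos (pi / real k)}"
  have "H = {x. inner (edge_normal k theta m) x \<le> r * cos (pi / real k) + inner (edge_normal k theta m) c}"
    unfolding H_def by (auto simp: inner_diff_left inner_commute)
  then have "convex H" by (simp add: convex_halfspace_le)
  moreover have "reg_vertex k c r theta j \<in> H" if "j < k" for j
  proof -
    define d where "d = \<bar>real j - real m - 1/2\<bar> * (2 * pi / real k)"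
    have "j \<le> m \<or> m + 1 \<le> j" by linarith
    then have "real j \<le> real m \<or> real m + 1 \<le> real j" by (metis of_nat_le_iff of_nat_Suc add.commute Suc_eq_plus1)
    then have "1/2 \<le> \<bar>real j - real m - 1/2\<bar>" "\<bar>real j - real m - 1/2\<bar> \<le> real k - 1/2"
      using \<open>j < k\<close> \<open>m < k\<close> by auto
    then have "1/2 * (2 * pi / real k) \<le> d" "d \<le> (real k - 1/2) * (2 * pi / real k)"
      unfolding d_def by (intro mult_right_mono; simp)+
    moreover have "1/2 * (2 * pi / real k) = pi / real k"
      "(real k - 1/2) * (2 * pi / real k) = 2 * pi - pi / real k"
      using \<open>m < k\<close> by (auto simp: field_simps)
    ultimately have "pi / real k \<le> d" "d \<le> 2 * pi - pi / real k" by simp_all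
    then have "cos d \<le> cos (pi / real k)"
      using \<open>m < k\<close> by (intro cos_le_cos_between) (auto simp: field_simps)
    moreover have "cos ((real j - real m - 1/2) * (2 * pi / real k)) = cos d"
    proof -
      have "0 \<le> 2 * pi / real k" by simp
      then show ?thesis unfolding d_def by (metis abs_mult abs_of_nonneg cos_abs_real)
    qed
    ultimately show ?thesis
      unfolding H_def using assms(1) by (simp add: inner_reg_vertex_edge_normal mult_left_mono)
  qed
  ultimately have "regular_polygon k c r theta \<subseteq> H"
    unfolding regular_polygon_def by (intro hull_minimal) auto
  with assms(3) show ?thesis unfolding H_def by auto
qed

lemma sector_coordinates:
  assumes "3 \<le> k" "0 < r"
  shows "\<exists>m<k. \<exists>p q. 0 \<le> p \<and> 0 \<le> q \<and>
           z = c + p *\<^sub>R (reg_vertex k c r theta m - c) + q *\<^sub>R (reg_vertex k c r theta (Suc m) - c)"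
proof -
  define f where "f = 2 * pi / real k"
  have f: "0 < f" "f < pi" unfolding f_def using assms by (auto simp: field_simps)
  then have "0 < sin f" by (intro sin_gt_zero)
  obtain m s where "m < k" "0 \<le> s" "s < 1"
    and arg: "cis (Arg (z - c)) = cis (theta + (real m + s) * f)"
    using cis_mem_sector[of k "Arg (z - c)" theta] assms unfolding f_def by auto
  define psi where "psi = theta + real m * f"
  \<comment> \<open>coordinates of \<open>z - c\<close> along the corners \<open>m\<close> and \<open>m + 1\<close>, by the sine rule\<close>
  define p where "p = cmod (z - c) * sin ((1 - s) * f) / (r * sin f)"
  define q where "q = cmod (z - c) * sin (s * f) / (r * sin f)"
  have "(1 - s) * f \<le> f" "s * f \<le> f" "0 \<le> (1 - s) * f" "0 \<le> s * f"
    using \<open>0 \<le> s\<close> \<open>s < 1\<close> f by (auto simp: mult_le_cancel_right1)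
  then have "0 \<le> sin ((1 - s) * f)" "0 \<le> sin (s * f)"
    using f by (intro sin_ge_zero; linarith)+
  then have "0 \<le> p" "0 \<le> q"
    unfolding p_def q_def using \<open>0 < r\<close> \<open>0 < sin f\<close> by simp_all
  have "z - c = complex_of_real (cmod (z - c)) * cis (psi + s * f)"
    using arg unfolding psi_def by (metis rcis_cmod_Arg rcis_def distrib_right add.assoc)
  then have "complex_of_real (sin f) * (z - c)
      = complex_of_real (cmod (z - c)) * (complex_of_real (sin f) * cis (psi + s * f))"
    by (metis mult.left_commute)
  also have "\<dots> = complex_of_real (cmod (z - c)) *
      (complex_of_real (sin ((1 - s) * f)) * cis psi + complex_of_real (sin (s * f)) * cis (psi + f))"
    unfolding sin_cis_interpolation ..
  finally have "z - c = complex_of_real p * (complex_of_real r * cis psi)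
                     + complex_of_real q * (complex_of_real r * cis (psi + f))"
    unfolding p_def q_def using \<open>0 < sin f\<close> \<open>0 < r\<close> by (simp add: field_simps)
  moreover have "reg_vertex k c r theta m - c = complex_of_real r * cis psi"
    "reg_vertex k c r theta (Suc m) - c = complex_of_real r * cis (psi + f)"
    unfolding reg_vertex_cis psi_def f_def by (simp_all add: algebra_simps add_divide_distrib)
  ultimately show ?thesis
    using \<open>m < k\<close> \<open>0 \<le> p\<close> \<open>0 \<le> q\<close> by (metis scaleR_conv_of_real add.assoc diff_add_cancel add.commute)
qed

lemma sector_triangle_subset_regular_polygon:
  assumes "2 \<le> k" "0 \<le> p" "0 \<le> q" "p + q \<le> 1"
  shows "c + p *\<^sub>R (reg_vertex k c r theta m - c) + q *\<^sub>R (reg_vertex k c r theta (Suc m) - c)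
           \<in> regular_polygon k c r theta"
  using assms
  by (intro convex_triangle_mem convex_regular_polygon center_in_regular_polygon
        reg_vertex_in_regular_polygon) auto

lemma sector_coefficients_sum_le_1:
  assumes "3 \<le> k" "0 < r"
    and "inner (p *\<^sub>R (reg_vertex k c r theta m - c) + q *\<^sub>R (reg_vertex k c r theta (Suc m) - c))
           (edge_normal k theta m) \<le> r * cos (pi / real k)"
  shows "p + q \<le> 1"
proof -
  have "(p + q) * (r * cos (pi / real k)) \<le> 1 * (r * cos (pi / real k))"
    using assms(3) by (simp add: inner_sector_point_edge_normal)
  moreover have "0 < r * cos (pi / real k)"
    using assms(1,2) cos_pi_div_pos by simp
  ultimately show ?thesis by (simp add: mult_le_cancel_right2)
qed

lemma regular_polygon_sector_cases:
  assumes "3 \<le> k" "0 < r" "z \<in> regular_polygon k c r theta"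
  obtains m p q where "m < k" "0 \<le> p" "0 \<le> q" "p + q \<le> 1"
    "z = c + p *\<^sub>R (reg_vertex k c r theta m - c) + q *\<^sub>R (reg_vertex k c r theta (Suc m) - c)"
proof -
  obtain m p q where "m < k" "0 \<le> p" "0 \<le> q"
    and z: "z = c + p *\<^sub>R (reg_vertex k c r theta m - c) + q *\<^sub>R (reg_vertex k c r theta (Suc m) - c)"
    using sector_coordinates[OF assms(1,2)] by blast
  have "inner (z - c) (edge_normal k theta m) \<le> r * cos (pi / real k)"
    using assms \<open>m < k\<close> by (intro regular_polygon_inner_edge_normal_le) auto
  then have "p + q \<le> 1"
    using assms unfolding z by (intro sector_coefficients_sum_le_1) (auto simp: add.assoc)
  with that \<open>m < k\<close> \<open>0 \<le> p\<close> \<open>0 \<le> q\<close> z show thesis by blast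
qed

lemma cball_subset_regular_polygon:
  assumes "3 \<le> k" "0 < r"
  shows "cball c (r * cos (pi / real k)) \<subseteq> regular_polygon k c r theta"
proof
  fix z assume "z \<in> cball c (r * cos (pi / real k))"
  obtain m p q where "m < k" "0 \<le> p" "0 \<le> q"
    and z: "z = c + p *\<^sub>R (reg_vertex k c r theta m - c) + q *\<^sub>R (reg_vertex k c r theta (Suc m) - c)"
    using sector_coordinates[OF assms] by blast
  have "inner (z - c) (edge_normal k theta m) \<le> norm (z - c) * norm (edge_normal k theta m)"
    by (rule norm_cauchy_schwarz)
  also have "\<dots> \<le> r * cos (pi / real k)"
    using \<open>z \<in> cball c _\<close> by (simp add: edge_normal_def dist_norm norm_minus_commute)
  finally have "p + q \<le> 1"
    using assms unfolding z by (intro sector_coefficients_sum_le_1) (auto simp: add.assoc)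
  then show "z \<in> regular_polygon k c r theta"
    unfolding z using assms \<open>0 \<le> p\<close> \<open>0 \<le> q\<close> by (intro sector_triangle_subset_regular_polygon) auto
qed

lemma norm_reg_vertex_edge:
  assumes "0 \<le> r" "0 < k"
  shows "cmod (reg_vertex k c r theta (Suc m) - reg_vertex k c r theta m) = 2 * r * sin (pi / real k)"
proof -
  define g where "g = pi / real k"
  define psi where "psi = theta + real m * (2 * pi / real k) + g"
  have "reg_vertex k c r theta (Suc m) - reg_vertex k c r theta m
      = complex_of_real r * cis psi * (cis g - cis (- g))"
    unfolding reg_vertex_cis psi_def g_def
    by (simp add: right_diff_distrib cis_mult add_divide_distrib algebra_simps)
  also have "cis g - cis (- g) = 2 * \<i> * complex_of_real (sin g)"
    by (simp add: complex_eq_iff)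
  finally show ?thesis
    using assms unfolding g_def by (simp add: norm_mult sin_ge_zero)
qed

lemma half_edge_translates_in_regular_polygon:
  assumes "4 \<le> k" "0 < r"
  shows "c + (1/2) *\<^sub>R (reg_vertex k c r theta (Suc m) - reg_vertex k c r theta m) \<in> regular_polygon k c r theta"
    and "c + (1/2) *\<^sub>R (reg_vertex k c r theta m - reg_vertex k c r theta (Suc m)) \<in> regular_polygon k c r theta"
proof -
  have "sin (pi / real k) \<le> cos (pi / real k)"
    using assms by (intro sin_le_cos) (auto simp: field_simps)
  then have "cmod (reg_vertex k c r theta (Suc m) - reg_vertex k c r theta m) / 2 \<le> r * cos (pi / real k)"
    using assms by (simp add: norm_reg_vertex_edge)
  then have "c + (1/2) *\<^sub>R (reg_vertex k c r theta (Suc m) - reg_vertex k c r theta m) \<in> cball c (r * cos (pi / real k))"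
    "c + (1/2) *\<^sub>R (reg_vertex k c r theta m - reg_vertex k c r theta (Suc m)) \<in> cball c (r * cos (pi / real k))"
    by (simp_all add: dist_norm norm_minus_commute)
  with cball_subset_regular_polygon[of k r c theta] assms
  show "c + (1/2) *\<^sub>R (reg_vertex k c r theta (Suc m) - reg_vertex k c r theta m) \<in> regular_polygon k c r theta"
    and "c + (1/2) *\<^sub>R (reg_vertex k c r theta m - reg_vertex k c r theta (Suc m)) \<in> regular_polygon k c r theta"
    by auto
qed

lemma homothety_eq_scaleR: "homothety p lam = (\<lambda>x. p + lam *\<^sub>R (x - p))"
  by (simp add: fun_eq_iff homothety_def scaleR_conv_of_real)

lemma regular_polygon_eq_union_homothetic_copies:
  assumes "4 \<le> k" "0 < r" "1/2 < lam" "lam \<le> 1"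
  shows "regular_polygon k c r theta
           = homothety c lam ` regular_polygon k c r theta
             \<union> (\<Union>i<k. homothety (reg_vertex k c r theta i) lam ` regular_polygon k c r theta)"
    (is "?P = ?U")
proof
  have "homothety v lam ` ?P \<subseteq> ?P" if "v \<in> ?P" for v
    unfolding homothety_eq_scaleR using that assms
    by (intro convex_homothety_image_subset convex_regular_polygon) auto
  moreover have "c \<in> ?P" "\<And>i. reg_vertex k c r theta i \<in> ?P"
    using assms by (auto intro: center_in_regular_polygon reg_vertex_in_regular_polygon)
  ultimately show "?U \<subseteq> ?P" by blast
next
  show "?P \<subseteq> ?U"
  proof
    fix x assume "x \<in> ?P"
    then obtain m p q where "m < k" "0 \<le> p" "0 \<le> q" "p + q \<le> 1"
      and x: "x = c + p *\<^sub>R (reg_vertex k c r theta m - c) + q *\<^sub>R (reg_vertex k c r theta (Suc m) - c)"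
      using assms regular_polygon_sector_cases [of k r x c theta] by auto
    define v where "v = reg_vertex k c r theta m"
    define w where "w = reg_vertex k c r theta (Suc m mod k)"
    have w_eq: "w = reg_vertex k c r theta (Suc m)"
      unfolding w_def using assms by (simp add: reg_vertex_mod)
    have mem: "convex ?P" "c \<in> ?P" "v \<in> ?P" "w \<in> ?P"
      "c + (1/2) *\<^sub>R (w - v) \<in> ?P" "c + (1/2) *\<^sub>R (v - w) \<in> ?P"
      unfolding v_def w_eq using assms
      by (simp_all add: convex_regular_polygon center_in_regular_polygon reg_vertex_in_regular_polygon
          half_edge_translates_in_regular_polygon)
    have "v \<in> reg_vertex k c r theta ` {..<k}" "w \<in> reg_vertex k c r theta ` {..<k}"
      unfolding v_def w_def using \<open>m < k\<close> assms by auto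
    moreover consider "q \<le> p" | "p \<le> q" by linarith
    then have "x \<in> (\<lambda>y. c + lam *\<^sub>R (y - c)) ` ?P
                 \<union> (\<lambda>y. v + lam *\<^sub>R (y - v)) ` ?P \<union> (\<lambda>y. w + lam *\<^sub>R (y - w)) ` ?P"
    proof cases
      case 1
      have "c + p *\<^sub>R (v - c) + q *\<^sub>R (w - c)
              \<in> (\<lambda>y. c + lam *\<^sub>R (y - c)) ` ?P \<union> (\<lambda>y. v + lam *\<^sub>R (y - v)) ` ?P"
        by (rule triangle_point_in_homothetic_copy [OF mem(1-5)]) (use 1 assms \<open>0 \<le> q\<close> \<open>p + q \<le> 1\<close> in auto)
      then show ?thesis unfolding x v_def w_eq by blast
    next
      case 2
      have "c + q *\<^sub>R (w - c) + p *\<^sub>R (v - c)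
              \<in> (\<lambda>y. c + lam *\<^sub>R (y - c)) ` ?P \<union> (\<lambda>y. w + lam *\<^sub>R (y - w)) ` ?P"
        by (rule triangle_point_in_homothetic_copy [OF mem(1,2,4,3,6)]) (use 2 assms \<open>0 \<le> p\<close> \<open>p + q \<le> 1\<close> in auto)
      moreover have "x = c + q *\<^sub>R (w - c) + p *\<^sub>R (v - c)"
        unfolding x v_def w_eq by (simp add: add_ac)
      ultimately show ?thesis by blast
    qed
    ultimately show "x \<in> ?U"
      unfolding homothety_eq_scaleR by blast
  qed
qed

theorem lemma9:
  fixes k j :: nat and c :: complex and r theta :: real
  assumes "k \<ge> 4" and "r > 0"
    and "2 ^ j \<le> enclosing_diameter (regular_polygon k c r theta)"
    and "enclosing_diameter (regular_polygon k c r theta) < 2 ^ (j + 1)"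
  shows "regular_polygon k c r theta = \<Union> (shrunk_set k c r theta j)"
proof -
  define w where "w = enclosing_diameter (regular_polygon k c r theta)"
  have "0 < w"
    using less_le_trans [OF zero_less_power assms(3)] unfolding w_def by simp
  then have "1/2 < 2 ^ j / w" "2 ^ j / w \<le> 1"
    using assms(3,4) unfolding w_def by (simp_all add: field_simps)
  then have "regular_polygon k c r theta
      = \<Union> (insert (homothety c (2 ^ j / w) ` regular_polygon k c r theta)
          ((\<lambda>i. homothety (reg_vertex k c r theta i) (2 ^ j / w) ` regular_polygon k c r theta) ` {..<k}))"
    using regular_polygon_eq_union_homothetic_copies [OF assms(1,2)] by simp
  then show ?thesis
    unfolding shrunk_set_def Let_def w_def [symmetric] by simp
qed

end
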